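(* Let $\mathfrak S$ be a controlled Markov process and $\mathcal G$ its induced abstract $2\frac12$-player game graph (as described in the context). Let $U\subseteq V_0$, let $v\in U$, and let $\pi_0$ be a deterministic memoryless strategy of Player 0 such that $\inf_{\pi_1}P_v^{\pi_0,\pi_1}(\mathcal G\models\square U)=1$, where the infimum ranges over all strategies $\pi_1$ of Player 1. Then the refinement $\rho$ of $\pi_0$ ensures $P_s^{\rho}(\mathfrak S\models\square Q^{-1}(U))=1$ for every state $s\in v$.
   Context: CMP: $\mathfrak S=(\mathcal S,\mathcal U,T_{\mathfrak s})$ with $\mathcal S$ a Borel space, $\mathcal U$ finite, and $T_{\mathfrak s}(\cdot\mid s,u)$ a probability measure on the Borel sets of $\mathcal S$. A stationary policy is a universally measurable $\rho:\mathcal S\to\mathcal U$; $P_s^\rho$ is the induced measure on infinite paths from $s$ with $s^{k+1}\sim T_{\mathfrak s}(\cdot\mid s^k,\rho(s^k))$. $\mathcal P=\langle B_1,\dots,B_\ell\rangle$ is a given partition of $\mathcal S$ into measurable sets. Abstraction: $\widehat{\mathcal S}$ is a finite partition of $\mathcal S$ into nonempty (measurable) cells each contained in a single $B_i$. $Q:\mathcal S\to\widehat{\mathcal S}$ maps $s$ to its cell; $Q^{-1}(\widehat U)=\bigcup_{\widehat s\in\widehat U}\widehat s$. Functions $\overline F,\underline F:\widehat{\mathcal S}\times\mathcal U\to2^{\widehat{\mathcal S}}$ satisfy $\overline F(\widehat s,u)\supseteq\{\widehat s'\mid\exists s\in\widehat s.\ T_{\mathfrak s}(\widehat s'\mid s,u)>0\}$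 and $\underline F(\widehat s,u)\subseteq\{\widehat s'\mid\exists\varepsilon>0\ \forall s\in\widehat s.\ T_{\mathfrak s}(\widehat s'\mid s,u)\ge\varepsilon\}$. Game graph $\mathcal G=\langle V,E,\langle V_0,V_1,V_r\rangle\rangle$: $V_0=\widehat{\mathcal S}$, $V_1=\widehat{\mathcal S}\times\mathcal U$, $V_r=\bigcup_{v_1\in V_1}V_r(v_1)$ with $V_r(v_1)=\{v_r\subseteq\widehat{\mathcal S}\mid\underline F(v_1)\subseteq v_r\subseteq\overline F(v_1),\ 1\le|v_r|\le|\underline F(v_1)|+1\}$; $E(v_0)=\{(v_0,u)\mid u\in\mathcal U\}$, $E(v_1)=V_r(v_1)$, $E(v_r)=\{v_0\in V_0\mid v_0\in v_r\}$. Player 0 moves at $V_0$, Player 1 at $V_1$, and at $V_r$ the successor is uniformly random. Strategies $\pi_i:V^*V_i\to\mathit{Dist}(V)$ are supported on successors; a deterministic memoryless Player 0 strategy assigns each $v_0$ a single successor $\pi_0(v_0)=(v_0,u)$. $P_v^{\pi_0,\pi_1}$ is the induced measure on runs. A run of $\mathcal G$ satisfies a specification over $V_0$ (such as $\square U$: always in $U$) iff its projection onto its subsequence of $V_0$-vertices does. Refinement: the refinement of a deterministic memoryless $\pi_0$ is $\rho$ with $\rho(s)=u$ whenever $s\in\widehat s$ and $\pi_0(\widehat s)=(\widehat s,u)$. *)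

theory Defs
  imports "HOL-Probability.Probability"
begin

text \<open>Finite-dimensional distributions of the path measure P_s^rho:
  probability that s^0 in A 0, ..., s^n in A n, where s^0 = s and
  s^(k+1) ~ T(. | s^k, rho(s^k)).\<close>
primrec cmp_fdd :: "('s \<Rightarrow> 'u \<Rightarrow> 's measure) \<Rightarrow> ('s \<Rightarrow> 'u) \<Rightarrow> 's \<Rightarrow> nat \<Rightarrow> (nat \<Rightarrow> 's set) \<Rightarrow> ennreal"
where
  "cmp_fdd T \<rho> s 0 A = indicator (A 0) s"
| "cmp_fdd T \<rho> s (Suc n) A =
     indicator (A 0) s * (\<integral>\<^sup>+ t. cmp_fdd T \<rho> t n (\<lambda>i. A (Suc i)) \<partial>(T s (\<rho> s)))"

definition cmp_path_measure ::
  "'s measure \<Rightarrow> ('s \<Rightarrow> 'u \<Rightarrow> 's measure) \<Rightarrow> ('s \<Rightarrow> 'u) \<Rightarrow> 's \<Rightarrow> 's stream measure \<Rightarrow> bool"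
where
  "cmp_path_measure M T \<rho> s P \<longleftrightarrow>
     prob_space P \<and> sets P = sets (stream_space M) \<and>
     (\<forall>n A. (\<forall>i\<le>n. A i \<in> sets M) \<longrightarrow>
        emeasure P {\<omega> \<in> space P. \<forall>i\<le>n. \<omega> !! i \<in> A i} = cmp_fdd T \<rho> s n A)"

definition cell_of :: "'s set set \<Rightarrow> 's \<Rightarrow> 's set"
  where "cell_of cells s = (THE c. c \<in> cells \<and> s \<in> c)"

text \<open>Refinement of a deterministic memoryless Player 0 strategy, given as the
  map sigma from cells to actions (pi_0(c) = (c, sigma c)).\<close>
definition refinement :: "'s set set \<Rightarrow> ('s set \<Rightarrow> 'u) \<Rightarrow> 's \<Rightarrow> 'u"
  where "refinement cells \<sigma> s = \<sigma> (cell_of cells s)"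

datatype ('c, 'u) gvertex = GV0 'c | GV1 'c 'u | GVr "'c set"

definition Vr_of :: "'c set \<Rightarrow> 'c set \<Rightarrow> 'c set set" where
  "Vr_of Flow Fup = {r. Flow \<subseteq> r \<and> r \<subseteq> Fup \<and> 1 \<le> card r \<and> card r \<le> card Flow + 1}"

definition game_vertices ::
  "'c set \<Rightarrow> ('c \<Rightarrow> 'u \<Rightarrow> 'c set) \<Rightarrow> ('c \<Rightarrow> 'u \<Rightarrow> 'c set) \<Rightarrow> ('c, 'u) gvertex set" where
  "game_vertices cells Flow Fup =
     GV0 ` cells \<union> {GV1 c u | c u. c \<in> cells} \<union>
     GVr ` (\<Union>c\<in>cells. \<Union>u. Vr_of (Flow c u) (Fup c u))"

fun game_succ ::
  "('c \<Rightarrow> 'u \<Rightarrow> 'c set) \<Rightarrow> ('c \<Rightarrow> 'u \<Rightarrow> 'c set) \<Rightarrow> ('c, 'u) gvertex \<Rightarrow> ('c, 'u) gvertex set" where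
  "game_succ Flow Fup (GV0 c) = {GV1 c u | u. True}"
| "game_succ Flow Fup (GV1 c u) = GVr ` Vr_of (Flow c u) (Fup c u)"
| "game_succ Flow Fup (GVr r) = GV0 ` r"

definition is_GV1 :: "('c, 'u) gvertex \<Rightarrow> bool" where
  "is_GV1 v \<longleftrightarrow> (\<exists>c u. v = GV1 c u)"

definition player1_strategies ::
  "'c set \<Rightarrow> ('c \<Rightarrow> 'u \<Rightarrow> 'c set) \<Rightarrow> ('c \<Rightarrow> 'u \<Rightarrow> 'c set)
   \<Rightarrow> (('c, 'u) gvertex list \<Rightarrow> ('c, 'u) gvertex pmf) set" where
  "player1_strategies cells Flow Fup =
     {\<pi>1. \<forall>h. h \<noteq> [] \<and> set h \<subseteq> game_vertices cells Flow Fup \<and> is_GV1 (last h) \<longrightarrow>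
            set_pmf (\<pi>1 h) \<subseteq> game_succ Flow Fup (last h)}"

definition game_trans ::
  "('c \<Rightarrow> 'u) \<Rightarrow> (('c, 'u) gvertex list \<Rightarrow> ('c, 'u) gvertex pmf)
   \<Rightarrow> ('c, 'u) gvertex list \<Rightarrow> ('c, 'u) gvertex pmf" where
  "game_trans \<sigma> \<pi>1 h = (case last h of
       GV0 c \<Rightarrow> return_pmf (GV1 c (\<sigma> c))
     | GV1 c u \<Rightarrow> \<pi>1 h
     | GVr r \<Rightarrow> pmf_of_set (GV0 ` r))"

definition is_game_measure ::
  "('c \<Rightarrow> 'u) \<Rightarrow> (('c, 'u) gvertex list \<Rightarrow> ('c, 'u) gvertex pmf) \<Rightarrow> ('c, 'u) gvertex
   \<Rightarrow> ('c, 'u) gvertex stream measure \<Rightarrow> bool" where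
  "is_game_measure \<sigma> \<pi>1 v P \<longleftrightarrow>
     prob_space P \<and> sets P = sets (stream_space (count_space UNIV)) \<and>
     (\<forall>w. emeasure P {\<omega> \<in> space P. stake (Suc (length w)) \<omega> = v # w} =
           ennreal (\<Prod>i<length w. pmf (game_trans \<sigma> \<pi>1 (take (Suc i) (v # w))) (w ! i)))"

definition game_measure ::
  "('c \<Rightarrow> 'u) \<Rightarrow> (('c, 'u) gvertex list \<Rightarrow> ('c, 'u) gvertex pmf) \<Rightarrow> ('c, 'u) gvertex
   \<Rightarrow> ('c, 'u) gvertex stream measure" where
  "game_measure \<sigma> \<pi>1 v = (SOME P. is_game_measure \<sigma> \<pi>1 v P)"

definition game_always :: "'c set \<Rightarrow> ('c, 'u) gvertex stream set" where
  "game_always U = {\<omega>. \<forall>i. case \<omega> !! i of GV0 c \<Rightarrow> c \<in> U | _ \<Rightarrow> True}"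

end

theory Submission
  imports Defs
begin

text \<open>Let \<open>W\<close> be the set of cells reachable from \<open>v\<close> when Player 0 plays \<open>\<sigma>\<close> and Player 1
  may move from \<open>c\<close> to any cell of \<open>Fup c (\<sigma> c)\<close>. Against the memoryless Player 1 strategy that
  resolves every choice uniformly, the play is a finite Markov chain in which every path into
  \<open>W\<close> has positive probability, because each \<open>c' \<in> Fup c (\<sigma> c)\<close> lies in the admissible set
  \<open>insert c' (Flow c (\<sigma> c))\<close>. As the game is won almost surely, \<open>W \<subseteq> U\<close>. On the concrete side
  \<open>\<Union>W\<close> is invariant under the refined policy: from any state of a cell \<open>c \<in> W\<close> the kernel puts
  no mass on cells outside \<open>Fup c (\<sigma> c) \<subseteq> W\<close>. So for every \<open>n\<close> the first \<open>n\<close> states lie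
  in \<open>\<Union>W\<close> with probability 1.\<close>

lemma (in prob_space) emeasure_Union_eq_1:
  assumes "finite C" "C \<subseteq> events" "\<Union>C = space M" "X \<subseteq> C"
    and "\<And>c. c \<in> C - X \<Longrightarrow> prob c = 0"
  shows "emeasure M (\<Union>X) = 1"
proof (rule emeasure_eq_1_AE)
  show "\<Union>X \<in> events"
    using assms(2,4) finite_subset[OF assms(4,1)] by (intro sets.finite_Union) auto
  have "AE x in M. \<forall>c\<in>C - X. x \<notin> c"
    using assms(1,2,5) by (intro AE_finite_allI AE_not_in) (auto simp: emeasure_eq_measure)
  with AE_space show "AE x in M. x \<in> \<Union>X"
    by eventually_elim (use assms(3) in blast)
qed

lemma (in prob_space) emeasure_disjoint_from_sure_event:
  assumes "emeasure M A = 1" "A \<in> events" "C \<in> events" "A \<inter> C = {}"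
  shows "emeasure M C = 0"
proof -
  have "prob A + prob C = prob (A \<union> C)"
    using assms(2-4) by (simp add: finite_measure_Union)
  also have "\<dots> \<le> 1" by (rule prob_le_1)
  finally show ?thesis
    using assms(1) by (simp add: emeasure_eq_measure antisym)
qed

section \<open>Finite Markov chains\<close>

fun path_prob :: "('a \<Rightarrow> 'a pmf) \<Rightarrow> 'a \<Rightarrow> 'a list \<Rightarrow> real" where
  "path_prob K x [] = 1"
| "path_prob K x (y # w) = pmf (K x) y * path_prob K y w"

lemma path_prob_nonneg: "path_prob K x w \<ge> 0"
  by (induction w arbitrary: x) auto

lemma path_prob_append:
  "path_prob K x (w @ w') = path_prob K x w * path_prob K (last (x # w)) w'"
  by (induction w arbitrary: x) auto

lemma prod_history_pmf_eq_path_prob: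
  assumes "\<And>h. h \<noteq> [] \<Longrightarrow> G h = K (last h)"
  shows "(\<Prod>i<length w. pmf (G (take (Suc i) (x # w))) (w ! i)) = path_prob K x w"
proof (induction w arbitrary: x)
  case (Cons y w)
  have "G (take (Suc (Suc i)) (x # y # w)) = G (take (Suc i) (y # w))" for i
    using assms[of "take (Suc (Suc i)) (x # y # w)"] assms[of "take (Suc i) (y # w)"] by simp
  then show ?case
    using Cons assms[of "[x]"] by (simp only: length_Cons prod.lessThan_Suc_shift) simp
qed simp

primcorec stream_walk :: "('a \<Rightarrow> 'b \<Rightarrow> 'a) \<Rightarrow> 'a \<Rightarrow> 'b stream \<Rightarrow> 'a stream" where
  "stream_walk f x X = x ## stream_walk f (f x (shd X)) (stl X)"

lemma sets_stake_cylinder: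
  "{\<omega> \<in> space (stream_space (count_space UNIV)). stake n \<omega> = l} \<in> sets (stream_space (count_space UNIV))"
proof -
  have "Measurable.pred (stream_space (count_space UNIV)) (\<lambda>\<omega>. length l = n \<and> (\<forall>i<n. \<omega> !! i = l ! i))"
    by (intro pred_intros_logic pred_intros_countable measurable_const)
       (auto intro!: pred_sets2[of "{l ! i}" for i] measurable_snth)
  moreover have "stake n \<omega> = l \<longleftrightarrow> length l = n \<and> (\<forall>i<n. \<omega> !! i = l ! i)" for \<omega>
    by (auto simp: list_eq_iff_nth_eq)
  ultimately show ?thesis by simp
qed

lemma measurable_stream_walk:
  assumes "finite V" "\<And>y g. y \<in> V \<Longrightarrow> f y g \<in> V" "x \<in> V"
  shows "stream_walk f x \<in> stream_space (measure_pmf J) \<rightarrow>\<^sub>M stream_space (count_space UNIV)"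
proof (rule measurable_stream_space2)
  fix n
  show "(\<lambda>X. stream_walk f x X !! n) \<in> stream_space (measure_pmf J) \<rightarrow>\<^sub>M count_space UNIV"
    using assms(3)
  proof (induction n arbitrary: x)
    case (Suc n)
    have "(\<lambda>X. stream_walk f (f x (shd X)) (stl X) !! n)
        \<in> stream_space (measure_pmf J) \<rightarrow>\<^sub>M count_space UNIV"
    proof (rule measurable_compose_countable'[where I = V and g = "\<lambda>X. f x (shd X)"
          and f = "\<lambda>y X. stream_walk f y (stl X) !! n"])
      show "(\<lambda>X. stream_walk f y (stl X) !! n) \<in> stream_space (measure_pmf J) \<rightarrow>\<^sub>M count_space UNIV"
        if "y \<in> V" for y
        using Suc.IH[OF that] by (intro measurable_compose[OF measurable_stl])
      show "(\<lambda>X. f x (shd X)) \<in> stream_space (measure_pmf J) \<rightarrow>\<^sub>M count_space V"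
        by (rule measurable_compose[OF measurable_shd]) (use assms(2) Suc.prems in auto)
    qed (use assms(1) in \<open>auto intro: countable_finite\<close>)
    then show ?case by simp
  qed simp
qed

lemma emeasure_stream_walk_cylinder:
  fixes K :: "'a \<Rightarrow> 'a pmf" and x0 :: 'a
  assumes V: "finite V" and KV: "\<And>y. y \<in> V \<Longrightarrow> set_pmf (K y) \<subseteq> V" and "x \<in> V"
  defines "J \<equiv> Pi_pmf V x0 K" and "f \<equiv> \<lambda>y g. if g y \<in> V then g y else y"
  shows "emeasure (stream_space (measure_pmf J)) {X. stake (Suc (length w)) (stream_walk f x X) = x # w}
    = ennreal (path_prob K x w)"
  using \<open>x \<in> V\<close>
proof (induction w arbitrary: x)
  case Nil
  interpret prob_space "stream_space (measure_pmf J)"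
    by (rule prob_space.prob_space_stream_space) (rule prob_space_measure_pmf)
  show ?case using emeasure_space_1 by (simp add: space_stream_space)
next
  case (Cons a w)
  let ?S = "stream_space (measure_pmf J)"
  let ?E = "\<lambda>y w. emeasure ?S {X. stake (Suc (length w)) (stream_walk f y X) = y # w}"
  have "stream_walk f x \<in> ?S \<rightarrow>\<^sub>M stream_space (count_space UNIV)"
    using V Cons.prems by (intro measurable_stream_walk) (auto simp: f_def)
  from measurable_sets[OF this sets_stake_cylinder]
  have sets_cyl: "{X. stake n (stream_walk f x X) = l} \<in> sets ?S" for n l
    by (simp add: space_stream_space vimage_def)
  have "map_pmf (f x) J = map_pmf (\<lambda>g. g x) J"
  proof (rule map_pmf_cong[OF refl])
    fix g assume "g \<in> set_pmf J"
    then have "g x \<in> set_pmf (K x)"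
      using set_Pi_pmf_subset'[OF V, of x0 K] Cons.prems by (auto simp: J_def PiE_dflt_def)
    then show "f x g = g x" using KV[OF Cons.prems] by (auto simp: f_def)
  qed
  also have "\<dots> = K x" using Pi_pmf_component[OF V, of x x0 K] Cons.prems by (simp add: J_def)
  finally have marginal: "map_pmf (f x) J = K x" .
  have step: "emeasure (measure_pmf J) {g. f x g = a} = pmf (K x) a"
    by (simp flip: emeasure_pmf_single marginal add: vimage_def)
  have "?E x (a # w) = (\<integral>\<^sup>+g. emeasure ?S
      {X \<in> space ?S. g ## X \<in> {X. stake (Suc (length (a # w))) (stream_walk f x X) = x # a # w}} \<partial>J)"
    by (rule prob_space.emeasure_stream_space[OF prob_space_measure_pmf sets_cyl])
  also have "\<dots> = (\<integral>\<^sup>+g. indicator {g. f x g = a} g * ?E a w \<partial>J)"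
    by (intro nn_integral_cong) (auto simp: space_stream_space split: split_indicator)
  also have "\<dots> = pmf (K x) a * ?E a w"
    using step by (simp add: nn_integral_multc)
  also have "\<dots> = pmf (K x) a * ennreal (path_prob K a w)"
  proof (cases "a \<in> V")
    case False
    then have "pmf (K x) a = 0" using KV[OF Cons.prems] by (auto simp: pmf_eq_0_set_pmf)
    then show ?thesis by simp
  qed (simp only: Cons.IH)
  finally show ?case by (simp add: ennreal_mult path_prob_nonneg)
qed

text \<open>The chain is realised as the walk driven by an i.i.d. stream of random maps \<open>g\<close>, where
  the values \<open>g y\<close> for \<open>y \<in> V\<close> are independent and distributed according to \<open>K y\<close>. The
  fallback in \<open>f\<close> keeps the walk inside \<open>V\<close> for every driving stream, not just almost
  surely, which makes it measurable.\<close>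
lemma finite_markov_chain_exists:
  fixes K :: "'a \<Rightarrow> 'a pmf"
  assumes V: "finite V" and KV: "\<And>y. y \<in> V \<Longrightarrow> set_pmf (K y) \<subseteq> V" and x: "x \<in> V"
  obtains P where "prob_space P" "sets P = sets (stream_space (count_space UNIV))"
    "\<And>w. emeasure P {\<omega> \<in> space P. stake (Suc (length w)) \<omega> = x # w} = ennreal (path_prob K x w)"
proof -
  define J where "J = Pi_pmf V x K"
  define f where "f = (\<lambda>y g. if g y \<in> V then g y else y)"
  let ?S = "stream_space (measure_pmf J)" and ?N = "stream_space (count_space UNIV)"
  have meas: "stream_walk f x \<in> ?S \<rightarrow>\<^sub>M ?N"
    using V x by (intro measurable_stream_walk) (auto simp: f_def)
  show ?thesis
  proof (rule that)
    show "prob_space (distr ?S ?N (stream_walk f x))"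
      by (intro prob_space.prob_space_distr prob_space.prob_space_stream_space
          prob_space_measure_pmf meas)
    show "sets (distr ?S ?N (stream_walk f x)) = sets ?N" by simp
    fix w
    have "emeasure (distr ?S ?N (stream_walk f x))
        {\<omega> \<in> space (distr ?S ?N (stream_walk f x)). stake (Suc (length w)) \<omega> = x # w}
      = emeasure ?S (stream_walk f x -` {\<omega> \<in> space ?N. stake (Suc (length w)) \<omega> = x # w} \<inter> space ?S)"
      by (simp only: space_distr emeasure_distr[OF meas sets_stake_cylinder])
    also have "\<dots> = emeasure ?S {X. stake (Suc (length w)) (stream_walk f x X) = x # w}"
      by (simp add: space_stream_space vimage_def)
    also have "\<dots> = ennreal (path_prob K x w)"
      unfolding J_def f_def by (rule emeasure_stream_walk_cylinder[OF V KV x])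
    finally show "emeasure (distr ?S ?N (stream_walk f x))
        {\<omega> \<in> space (distr ?S ?N (stream_walk f x)). stake (Suc (length w)) \<omega> = x # w}
      = ennreal (path_prob K x w)" .
  qed
qed

section \<open>Invariant sets of the controlled Markov process\<close>

lemma cmp_fdd_invariant:
  assumes "\<And>t. t \<in> W \<Longrightarrow> W \<in> sets (T t (\<rho> t)) \<and> emeasure (T t (\<rho> t)) W = 1"
  shows "cmp_fdd T \<rho> t n (\<lambda>_. W) = indicator W t"
proof (induction n arbitrary: t)
  case (Suc n)
  show ?case
  proof (cases "t \<in> W")
    case True
    then show ?thesis using assms[OF True] by (simp add: Suc)
  qed simp
qed simp

lemma cmp_path_measure_AE_always:
  assumes P: "cmp_path_measure M T \<rho> s P" and W: "W \<in> sets M" "s \<in> W"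
    and invariant: "\<And>t. t \<in> W \<Longrightarrow> sets (T t (\<rho> t)) = sets M \<and> emeasure (T t (\<rho> t)) W = 1"
  shows "AE \<omega> in P. \<forall>i. \<omega> !! i \<in> W"
proof -
  interpret prob_space P using P by (simp add: cmp_path_measure_def)
  have sets_P: "sets P = sets (stream_space M)" using P by (simp add: cmp_path_measure_def)
  have "cmp_fdd T \<rho> s n (\<lambda>_. W) = 1" for n
    by (subst cmp_fdd_invariant) (use invariant W in auto)
  then have "emeasure P {\<omega> \<in> space P. \<forall>i\<le>n. \<omega> !! i \<in> W} = 1" for n
    using P W(1) by (simp add: cmp_path_measure_def)
  moreover have "Measurable.pred P (\<lambda>\<omega>. \<forall>i\<le>n. \<omega> !! i \<in> W)" for n
    unfolding measurable_cong_sets[OF sets_P refl]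
    by (intro pred_intros_countable pred_intros_logic measurable_const)
      (auto intro!: pred_sets2[OF W(1)] measurable_snth)
  ultimately have "AE \<omega> in P. \<forall>i\<le>n. \<omega> !! i \<in> W" for n
    using AE_iff_emeasure_eq_1 by blast
  then have "AE \<omega> in P. \<forall>n. \<forall>i\<le>n. \<omega> !! i \<in> W"
    by (subst AE_all_countable) blast
  then show ?thesis by eventually_elim blast
qed

section \<open>The abstract game\<close>

lemma cell_of_eqI: "disjoint C \<Longrightarrow> c \<in> C \<Longrightarrow> x \<in> c \<Longrightarrow> cell_of C x = c"
  unfolding cell_of_def by (rule the_equality) (auto simp: disjoint_def)

lemma refinement_eqI: "disjoint C \<Longrightarrow> c \<in> C \<Longrightarrow> x \<in> c \<Longrightarrow> refinement C \<sigma> x = \<sigma> c"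
  by (simp add: refinement_def cell_of_eqI)

lemma Vr_ofD: "r \<in> Vr_of Flow Fup \<Longrightarrow> r \<subseteq> Fup \<and> r \<noteq> {} \<and> finite r"
  by (auto simp: Vr_of_def Suc_le_eq card_gt_0_iff)

lemma finite_Vr_of: "finite Fup \<Longrightarrow> finite (Vr_of Flow Fup)"
  by (rule finite_subset[of _ "Pow Fup"]) (auto simp: Vr_of_def)

lemma insert_in_Vr_of:
  assumes "Flow \<subseteq> Fup" "finite Fup" "c \<in> Fup"
  shows "insert c Flow \<in> Vr_of Flow Fup"
proof -
  have "finite Flow" using assms(1,2) by (rule finite_subset)
  then show ?thesis using assms by (auto simp: Vr_of_def card_insert_if Suc_le_eq card_gt_0_iff)
qed

definition uniform_player1 ::
  "('c \<Rightarrow> 'u \<Rightarrow> 'c set) \<Rightarrow> ('c \<Rightarrow> 'u \<Rightarrow> 'c set) \<Rightarrow> ('c, 'u) gvertex list \<Rightarrow> ('c, 'u) gvertex pmf" where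
  "uniform_player1 Flow Fup h = pmf_of_set (game_succ Flow Fup (last h))"

definition uniform_kernel :: "('c \<Rightarrow> 'u) \<Rightarrow> ('c \<Rightarrow> 'u \<Rightarrow> 'c set) \<Rightarrow> ('c \<Rightarrow> 'u \<Rightarrow> 'c set)
    \<Rightarrow> ('c, 'u) gvertex \<Rightarrow> ('c, 'u) gvertex pmf" where
  "uniform_kernel \<sigma> Flow Fup x = game_trans \<sigma> (uniform_player1 Flow Fup) [x]"

lemma game_trans_uniform_player1:
  "h \<noteq> [] \<Longrightarrow> game_trans \<sigma> (uniform_player1 Flow Fup) h = uniform_kernel \<sigma> Flow Fup (last h)"
  by (simp add: uniform_kernel_def game_trans_def uniform_player1_def split: gvertex.split)

lemma sets_game_always: "game_always U \<in> sets (stream_space (count_space UNIV))"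
proof -
  have "Measurable.pred (stream_space (count_space UNIV))
      (\<lambda>\<omega>. \<forall>i. case \<omega> !! i of GV0 c \<Rightarrow> c \<in> U | _ \<Rightarrow> True)"
    by (intro pred_intros_countable) (auto intro!: measurable_compose[OF measurable_snth])
  from predE[OF this] show ?thesis by (simp add: game_always_def space_stream_space)
qed

lemma game_always_disjoint_cylinder:
  assumes "last (x # w) = GV0 c" "c \<notin> U"
  shows "game_always U \<inter> {\<omega>. stake (Suc (length w)) \<omega> = x # w} = {}"
proof (intro equals0I)
  fix \<omega> assume \<omega>: "\<omega> \<in> game_always U \<inter> {\<omega>. stake (Suc (length w)) \<omega> = x # w}"
  then have "\<omega> !! length w = (x # w) ! length w"
    by (auto simp flip: stake_nth[of "length w" "Suc (length w)"])
  also have "\<dots> = GV0 c" using assms(1) by (simp add: last_conv_nth del: last.simps)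
  finally have "\<omega> !! length w = GV0 c" .
  moreover have "case \<omega> !! length w of GV0 c \<Rightarrow> c \<in> U | _ \<Rightarrow> True"
    using \<omega> by (simp add: game_always_def)
  ultimately show False using assms(2) by simp
qed

inductive_set Fup_reachable :: "('c \<Rightarrow> 'u \<Rightarrow> 'c set) \<Rightarrow> ('c \<Rightarrow> 'u) \<Rightarrow> 'c \<Rightarrow> 'c set"
  for Fup \<sigma> v where
  start: "v \<in> Fup_reachable Fup \<sigma> v"
| step: "c \<in> Fup_reachable Fup \<sigma> v \<Longrightarrow> c' \<in> Fup c (\<sigma> c) \<Longrightarrow> c' \<in> Fup_reachable Fup \<sigma> v"

section \<open>Abstractions of a controlled Markov process\<close>

locale cmp_abstraction =
  fixes M :: "'s measure" and T :: "'s \<Rightarrow> 'u::finite \<Rightarrow> 's measure"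
    and cells :: "'s set set" and Flow Fup :: "'s set \<Rightarrow> 'u \<Rightarrow> 's set set"
  assumes prob_space_T: "x \<in> space M \<Longrightarrow> prob_space (T x u)"
    and sets_T: "x \<in> space M \<Longrightarrow> sets (T x u) = sets M"
    and finite_cells: "finite cells"
    and cells_sets: "cells \<subseteq> sets M"
    and Union_cells: "\<Union>cells = space M"
    and disjoint_cells: "disjoint cells"
    and cells_nonempty: "{} \<notin> cells"
    and Fup_cells: "c \<in> cells \<Longrightarrow> Fup c u \<subseteq> cells"
    and Fup_support: "c \<in> cells \<Longrightarrow> {c' \<in> cells. \<exists>x \<in> c. measure (T x u) c' > 0} \<subseteq> Fup c u"
    and Flow_lower: "c \<in> cells \<Longrightarrow>
      Flow c u \<subseteq> {c' \<in> cells. \<exists>\<epsilon>::real > 0. \<forall>x \<in> c. measure (T x u) c' \<ge> \<epsilon>}"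
begin

lemma emeasure_T_Union_eq_1:
  assumes c: "c \<in> cells" "x \<in> c" and X: "Fup c u \<subseteq> X" "X \<subseteq> cells"
  shows "emeasure (T x u) (\<Union>X) = 1"
proof -
  have x: "x \<in> space M" using c Union_cells by blast
  interpret prob_space "T x u" using x by (rule prob_space_T)
  show ?thesis
  proof (rule emeasure_Union_eq_1[OF finite_cells _ _ X(2)])
    show "cells \<subseteq> events" using cells_sets sets_T[OF x] by simp
    show "\<Union>cells = space (T x u)" using Union_cells sets_eq_imp_space_eq[OF sets_T[OF x]] by simp
    fix c' assume c': "c' \<in> cells - X"
    then have "\<not> prob c' > 0" using c X(1) Fup_support[OF c(1), of u] by blast
    then show "prob c' = 0" using measure_nonneg[of "T x u" c'] by linarith
  qed
qed

lemma Flow_subset_Fup: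
  assumes c: "c \<in> cells"
  shows "Flow c u \<subseteq> Fup c u"
proof
  fix c' assume c': "c' \<in> Flow c u"
  have "c \<noteq> {}" using c cells_nonempty by blast
  then obtain x where x: "x \<in> c" by blast
  obtain \<epsilon> :: real where "\<epsilon> > 0" "\<forall>x\<in>c. measure (T x u) c' \<ge> \<epsilon>" "c' \<in> cells"
    using Flow_lower[OF c] c' by blast
  with x show "c' \<in> Fup c u" using Fup_support[OF c] by force
qed

lemma Fup_nonempty: "c \<in> cells \<Longrightarrow> Fup c u \<noteq> {}"
  using emeasure_T_Union_eq_1[of c _ u "{}"] cells_nonempty by fastforce

lemma finite_Fup: "c \<in> cells \<Longrightarrow> finite (Fup c u)"
  using Fup_cells finite_cells by (rule finite_subset)

lemma Vr_of_nonempty: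
  assumes "c \<in> cells"
  shows "Vr_of (Flow c u) (Fup c u) \<noteq> {}"
proof -
  obtain c' where "c' \<in> Fup c u" using Fup_nonempty[OF assms] by blast
  with insert_in_Vr_of[OF Flow_subset_Fup finite_Fup] assms show ?thesis by blast
qed

lemma finite_game_vertices: "finite (game_vertices cells Flow Fup)"
proof -
  have "finite {GV1 c (u :: 'u) | c u. c \<in> cells}"
    by (rule finite_subset[of _ "case_prod GV1 ` (cells \<times> UNIV)"])
      (auto simp: finite_cells)
  moreover have "finite (\<Union>c\<in>cells. \<Union>u. Vr_of (Flow c u) (Fup c u))"
    by (rule finite_subset[of _ "Pow cells"]) (use finite_cells Fup_cells in \<open>auto dest!: Vr_ofD\<close>)
  ultimately show ?thesis using finite_cells by (simp add: game_vertices_def)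
qed

lemma game_succ_closed:
  assumes "x \<in> game_vertices cells Flow Fup"
  shows "game_succ Flow Fup x \<subseteq> game_vertices cells Flow Fup"
proof (cases x)
  case (GVr r)
  then obtain c u where "c \<in> cells" "r \<in> Vr_of (Flow c u) (Fup c u)"
    using assms by (auto simp: game_vertices_def)
  then have "r \<subseteq> cells" using Fup_cells Vr_ofD by blast
  then show ?thesis using GVr by (auto simp: game_vertices_def)
next
  case (GV1 c u)
  then have "c \<in> cells" using assms by (auto simp: game_vertices_def)
  then show ?thesis unfolding GV1 game_succ.simps game_vertices_def by blast
qed (use assms in \<open>auto simp: game_vertices_def\<close>)

lemma set_pmf_uniform_kernel:
  assumes "x \<in> game_vertices cells Flow Fup"
  shows "set_pmf (uniform_kernel \<sigma> Flow Fup x)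
    = (case x of GV0 c \<Rightarrow> {GV1 c (\<sigma> c)} | _ \<Rightarrow> game_succ Flow Fup x)"
proof (cases x)
  case (GV1 c u)
  then have "c \<in> cells" using assms by (auto simp: game_vertices_def)
  then show ?thesis using GV1 finite_Vr_of[OF finite_Fup] Vr_of_nonempty
    by (simp add: uniform_kernel_def game_trans_def uniform_player1_def)
next
  case (GVr r)
  then have "finite r" "r \<noteq> {}" using assms by (auto simp: game_vertices_def dest!: Vr_ofD)
  then show ?thesis using GVr by (simp add: uniform_kernel_def game_trans_def)
qed (simp add: uniform_kernel_def game_trans_def)

lemma uniform_player1_in_strategies: "uniform_player1 Flow Fup \<in> player1_strategies cells Flow Fup"
  unfolding player1_strategies_def
proof (intro CollectI allI impI)
  fix h assume h: "h \<noteq> [] \<and> set h \<subseteq> game_vertices cells Flow Fup \<and> is_GV1 (last h)"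
  then obtain c u where last_h: "last h = GV1 c u" by (auto simp: is_GV1_def)
  moreover have "c \<in> cells" using h last_h last_in_set[of h] by (auto simp: game_vertices_def)
  ultimately show "set_pmf (uniform_player1 Flow Fup h) \<subseteq> game_succ Flow Fup (last h)"
    using finite_Vr_of[OF finite_Fup] Vr_of_nonempty by (simp add: uniform_player1_def)
qed

text \<open>\<open>game_measure\<close> is defined by choice, so its cylinder probabilities are only known once
  some measure with the required property has been exhibited.\<close>
lemma game_measure_uniform_player1:
  fixes \<sigma> :: "'s set \<Rightarrow> 'u"
  assumes x: "x \<in> game_vertices cells Flow Fup"
  defines "G \<equiv> game_measure \<sigma> (uniform_player1 Flow Fup) x"
  shows "prob_space G" "sets G = sets (stream_space (count_space UNIV))"
    "emeasure G {\<omega> \<in> space G. stake (Suc (length w)) \<omega> = x # w}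
      = ennreal (path_prob (uniform_kernel \<sigma> Flow Fup) x w)"
proof -
  have prod_eq: "(\<Prod>i<length w. pmf (game_trans \<sigma> (uniform_player1 Flow Fup) (take (Suc i) (x # w))) (w ! i))
      = path_prob (uniform_kernel \<sigma> Flow Fup) x w" for w
    using game_trans_uniform_player1 by (rule prod_history_pmf_eq_path_prob)
  have "set_pmf (uniform_kernel \<sigma> Flow Fup y) \<subseteq> game_vertices cells Flow Fup"
    if "y \<in> game_vertices cells Flow Fup" for y
    using set_pmf_uniform_kernel[OF that] game_succ_closed[OF that]
    by (cases y) auto
  then obtain P where "prob_space P" "sets P = sets (stream_space (count_space UNIV))"
    "\<And>w. emeasure P {\<omega> \<in> space P. stake (Suc (length w)) \<omega> = x # w}
      = ennreal (path_prob (uniform_kernel \<sigma> Flow Fup) x w)"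
    using finite_markov_chain_exists[OF finite_game_vertices _ x] by blast
  then have "is_game_measure \<sigma> (uniform_player1 Flow Fup) x P"
    unfolding is_game_measure_def prod_eq by blast
  then have "is_game_measure \<sigma> (uniform_player1 Flow Fup) x G"
    unfolding G_def game_measure_def by (rule someI)
  then show "prob_space G" "sets G = sets (stream_space (count_space UNIV))"
    "emeasure G {\<omega> \<in> space G. stake (Suc (length w)) \<omega> = x # w}
      = ennreal (path_prob (uniform_kernel \<sigma> Flow Fup) x w)"
    unfolding is_game_measure_def prod_eq by blast+
qed

lemma positive_path_ends_in_safe_set:
  assumes x: "x \<in> game_vertices cells Flow Fup"
    and win: "(INF \<pi>1 \<in> player1_strategies cells Flow Fup.
      emeasure (game_measure \<sigma> \<pi>1 x) (game_always U)) = 1"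
    and w: "path_prob (uniform_kernel \<sigma> Flow Fup) x w > 0" "last (x # w) = GV0 c"
  shows "c \<in> U"
proof (rule ccontr)
  assume "c \<notin> U"
  let ?G = "game_measure \<sigma> (uniform_player1 Flow Fup) x"
  let ?C = "{\<omega> \<in> space ?G. stake (Suc (length w)) \<omega> = x # w}"
  interpret prob_space ?G using x by (rule game_measure_uniform_player1)
  have sets_G: "sets ?G = sets (stream_space (count_space UNIV))"
    using x by (rule game_measure_uniform_player1)
  have "emeasure ?G (game_always U) \<ge> 1"
    using INF_lower[OF uniform_player1_in_strategies, of "\<lambda>\<pi>1. emeasure (game_measure \<sigma> \<pi>1 x) (game_always U)"]
    by (simp add: win)
  then have "emeasure ?G (game_always U) = 1" by (simp add: emeasure_ge_1_iff)
  moreover have "game_always U \<in> events" using sets_G sets_game_always by simp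
  moreover have "?C \<in> events"
    unfolding sets_G sets_eq_imp_space_eq[OF sets_G] by (rule sets_stake_cylinder)
  moreover have "game_always U \<inter> ?C = {}"
    using game_always_disjoint_cylinder[OF w(2) \<open>c \<notin> U\<close>] by blast
  ultimately have "emeasure ?G ?C = 0" by (rule emeasure_disjoint_from_sure_event)
  moreover have "emeasure ?G ?C = ennreal (path_prob (uniform_kernel \<sigma> Flow Fup) x w)"
    using x by (rule game_measure_uniform_player1)
  ultimately show False using w(1) by simp
qed

lemma Fup_reachable_subset_cells:
  assumes "v \<in> cells"
  shows "Fup_reachable Fup \<sigma> v \<subseteq> cells"
proof
  fix c assume "c \<in> Fup_reachable Fup \<sigma> v"
  then show "c \<in> cells" by induction (use assms Fup_cells in auto)
qed

lemma Fup_reachable_path: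
  assumes v: "v \<in> cells" and "c \<in> Fup_reachable Fup \<sigma> v"
  shows "\<exists>w. path_prob (uniform_kernel \<sigma> Flow Fup) (GV0 v) w > 0 \<and> last (GV0 v # w) = GV0 c"
  using assms(2)
proof induction
  case start
  show ?case by (rule exI[of _ "[]"]) simp
next
  case (step c c')
  let ?K = "uniform_kernel \<sigma> Flow Fup"
  obtain w where w: "path_prob ?K (GV0 v) w > 0" "last (GV0 v # w) = GV0 c"
    using step.IH by blast
  have c: "c \<in> cells" using Fup_reachable_subset_cells[OF v] step.hyps(1) by blast
  define r where "r = insert c' (Flow c (\<sigma> c))"
  have r: "r \<in> Vr_of (Flow c (\<sigma> c)) (Fup c (\<sigma> c))"
    unfolding r_def using Flow_subset_Fup[OF c] finite_Fup[OF c] step.hyps(2) by (rule insert_in_Vr_of)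
  then have "GVr r \<in> game_vertices cells Flow Fup"
    unfolding game_vertices_def using c by blast
  moreover have "GV0 c \<in> game_vertices cells Flow Fup" "GV1 c (\<sigma> c) \<in> game_vertices cells Flow Fup"
    using c by (auto simp: game_vertices_def)
  ultimately have "path_prob ?K (GV0 c) [GV1 c (\<sigma> c), GVr r, GV0 c'] > 0"
    using r by (simp add: set_pmf_uniform_kernel pmf_positive_iff zero_less_mult_iff r_def)
  with w have "path_prob ?K (GV0 v) (w @ [GV1 c (\<sigma> c), GVr r, GV0 c']) > 0"
    by (simp add: path_prob_append)
  then show ?case by (intro exI[of _ "w @ [GV1 c (\<sigma> c), GVr r, GV0 c']"]) simp
qed

lemma Fup_reachable_subset_safe:
  assumes "v \<in> cells"
    and "(INF \<pi>1 \<in> player1_strategies cells Flow Fup.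
      emeasure (game_measure \<sigma> \<pi>1 (GV0 v)) (game_always U)) = 1"
  shows "Fup_reachable Fup \<sigma> v \<subseteq> U"
proof
  fix c assume "c \<in> Fup_reachable Fup \<sigma> v"
  then obtain w where "path_prob (uniform_kernel \<sigma> Flow Fup) (GV0 v) w > 0" "last (GV0 v # w) = GV0 c"
    using Fup_reachable_path[OF assms(1)] by blast
  moreover have "GV0 v \<in> game_vertices cells Flow Fup" using assms(1) by (simp add: game_vertices_def)
  ultimately show "c \<in> U" using positive_path_ends_in_safe_set assms(2) by blast
qed

lemma refinement_AE_always_Fup_reachable:
  assumes v: "v \<in> cells" "s \<in> v" and P: "cmp_path_measure M T (refinement cells \<sigma>) s P"
  shows "AE \<omega> in P. \<forall>i. \<omega> !! i \<in> \<Union>(Fup_reachable Fup \<sigma> v)"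
proof (rule cmp_path_measure_AE_always[OF P])
  let ?W = "Fup_reachable Fup \<sigma> v"
  have W: "?W \<subseteq> cells" using v(1) by (rule Fup_reachable_subset_cells)
  have "finite ?W" using W finite_cells by (rule finite_subset)
  moreover have "?W \<subseteq> sets M" using W cells_sets by (rule subset_trans)
  ultimately show "\<Union>?W \<in> sets M" by (rule sets.finite_Union)
  show "s \<in> \<Union>?W" by (rule UnionI[OF Fup_reachable.start v(2)])
  fix t assume "t \<in> \<Union>?W"
  then obtain c where c: "c \<in> ?W" "t \<in> c" by (rule UnionE)
  have "c \<in> cells" using W c(1) by (rule subsetD)
  then have "refinement cells \<sigma> t = \<sigma> c" "t \<in> space M"
    using c(2) disjoint_cells Union_cells by (auto intro: refinement_eqI)
  moreover have "Fup c (\<sigma> c) \<subseteq> ?W" using c(1) by (auto intro: Fup_reachable.step)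
  ultimately show "sets (T t (refinement cells \<sigma> t)) = sets M
      \<and> emeasure (T t (refinement cells \<sigma> t)) (\<Union>?W) = 1"
    using emeasure_T_Union_eq_1[OF \<open>c \<in> cells\<close> c(2) _ W] sets_T by simp
qed

theorem refinement_almost_surely_safe:
  assumes "U \<subseteq> cells" "v \<in> U"
    and win: "(INF \<pi>1 \<in> player1_strategies cells Flow Fup.
      emeasure (game_measure \<sigma> \<pi>1 (GV0 v)) (game_always U)) = 1"
    and "s \<in> v" and P: "cmp_path_measure M T (refinement cells \<sigma>) s P"
  shows "emeasure P {\<omega> \<in> space P. \<forall>i. \<omega> !! i \<in> \<Union>U} = 1"
proof -
  interpret prob_space P using P by (simp add: cmp_path_measure_def)
  have v: "v \<in> cells" using assms(1,2) by blast
  have U: "\<Union>U \<in> sets M"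
    using assms(1) cells_sets by (intro sets.finite_Union[OF finite_subset[OF assms(1) finite_cells]]) blast
  have sets_P: "sets P = sets (stream_space M)" using P by (simp add: cmp_path_measure_def)
  have meas: "Measurable.pred P (\<lambda>\<omega>. \<forall>i. \<omega> !! i \<in> \<Union>U)"
    unfolding measurable_cong_sets[OF sets_P refl]
    by (rule pred_intros_countable, rule pred_sets2[OF U], rule measurable_snth)
  have "AE \<omega> in P. \<forall>i. \<omega> !! i \<in> \<Union>(Fup_reachable Fup \<sigma> v)"
    using v \<open>s \<in> v\<close> P by (rule refinement_AE_always_Fup_reachable)
  then have "AE \<omega> in P. \<forall>i. \<omega> !! i \<in> \<Union>U"
    by eventually_elim (use Fup_reachable_subset_safe[OF v win] in blast)
  then show ?thesis using AE_iff_emeasure_eq_1[OF meas] by simp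
qed

end

theorem proposition1:
  fixes S :: "'s::polish_space set"
    and T :: "'s \<Rightarrow> 'u::finite \<Rightarrow> 's measure"
    and Bs :: "'s set list"
    and cells :: "'s set set"
    and Flow Fup :: "'s set \<Rightarrow> 'u \<Rightarrow> 's set set"
    and \<sigma> :: "'s set \<Rightarrow> 'u"
    and U :: "'s set set"
    and v :: "'s set"
  assumes S_borel: "S \<in> sets borel"
    and kernel: "\<And>u. (\<lambda>x. T x u) \<in> restrict_space borel S \<rightarrow>\<^sub>M prob_algebra (restrict_space borel S)"
    and Bs_meas: "\<forall>B \<in> set Bs. B \<in> sets (restrict_space borel S) \<and> B \<noteq> {}"
    and Bs_cover: "\<Union>(set Bs) = S"
    and Bs_disj: "\<forall>i < length Bs. \<forall>j < length Bs. i \<noteq> j \<longrightarrow> Bs ! i \<inter> Bs ! j = {}"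
    and cells_fin: "finite cells"
    and cells_cover: "\<Union>cells = S"
    and cells_disj: "disjoint cells"
    and cells_ok: "\<forall>c \<in> cells. c \<noteq> {} \<and> c \<in> sets (restrict_space borel S) \<and> (\<exists>B \<in> set Bs. c \<subseteq> B)"
    and Fup: "\<forall>c \<in> cells. \<forall>u. Fup c u \<subseteq> cells \<and>
               {c' \<in> cells. \<exists>x \<in> c. measure (T x u) c' > 0} \<subseteq> Fup c u"
    and Flow: "\<forall>c \<in> cells. \<forall>u. Flow c u \<subseteq>
               {c' \<in> cells. \<exists>\<epsilon>::real > 0. \<forall>x \<in> c. measure (T x u) c' \<ge> \<epsilon>}"
    and U_sub: "U \<subseteq> cells"
    and v_in: "v \<in> U"
    and win: "(INF \<pi>1 \<in> player1_strategies cells Flow Fup.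
                 emeasure (game_measure \<sigma> \<pi>1 (GV0 v)) (game_always U)) = 1"
  shows "\<forall>s \<in> v. \<forall>P. cmp_path_measure (restrict_space borel S) T (refinement cells \<sigma>) s P \<longrightarrow>
           emeasure P {\<omega> \<in> space P. \<forall>i. \<omega> !! i \<in> \<Union>U} = 1"
proof -
  have abstraction: "cmp_abstraction (restrict_space borel S) T cells Flow Fup"
  proof (rule cmp_abstraction.intro)
    show "prob_space (T x u)" "sets (T x u) = sets (restrict_space borel S)"
      if "x \<in> space (restrict_space borel S)" for x u
      using measurable_space[OF kernel that] by (simp_all add: space_prob_algebra)
    show "cells \<subseteq> sets (restrict_space borel S)" "{} \<notin> cells"
      using cells_ok by auto
    show "\<Union>cells = space (restrict_space borel S)"
      using cells_cover by (simp add: space_restrict_space)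
    show "Fup c u \<subseteq> cells" "{c' \<in> cells. \<exists>x \<in> c. measure (T x u) c' > 0} \<subseteq> Fup c u"
      if "c \<in> cells" for c u
      using Fup that by blast+
    show "Flow c u \<subseteq> {c' \<in> cells. \<exists>\<epsilon>::real > 0. \<forall>x \<in> c. measure (T x u) c' \<ge> \<epsilon>}"
      if "c \<in> cells" for c u
      using Flow that by blast
  qed (fact cells_fin, fact cells_disj)
  show ?thesis
  proof (intro ballI allI impI)
    fix s P assume "s \<in> v" "cmp_path_measure (restrict_space borel S) T (refinement cells \<sigma>) s P"
    then show "emeasure P {\<omega> \<in> space P. \<forall>i. \<omega> !! i \<in> \<Union>U} = 1"
      by (rule cmp_abstraction.refinement_almost_surely_safe[OF abstraction U_sub v_in win])
  qed
qed

end
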